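(* Let $1\le d\le r$ and $0\le k\le r-1$ be integers. Then: (i) All entries of $g^{r,d}_k$ are non-negative, and $\mathrm{last}(g^{r,d}_k)=0$ if and only if either ($d$ is even, $d=r$ and $k=0$) or ($d=1$ and $k>0$). (ii) If $d$ is odd, then $\mathrm{last}(\hat g^{r,d}_k)>0$ for $k\ge d/2$ and $\mathrm{last}(\hat g^{r,d}_k)<0$ for $k<d/2$. (iii) If $d$ is even, then $\mathrm{last}(\hat g^{r,d}_k)>0$ for $k>\frac{d+r}{2}$ and $\mathrm{last}(\hat g^{r,d}_k)<0$ for $k<\frac{d+r}{2}$; moreover, if $r$ is even, then $\mathrm{last}(\hat g^{r,d}_{(d+r)/2})=0$.
   Context: For integers $r\ge0$, $d\ge1$ and $i\in\mathbb Z$, $C(r,d,i)$ denotes the number of integer vectors $(u_1,\dots,u_d)$ with $u_1+\cdots+u_d=i$ and $0\le u_l\le r$ for all $l$. For integers $d\ge1$, $r\ge1$, $k\ge0$: if $0\le k\le r-1$, let $\hat g^{r,d}_k=(g_0,g_1,\dots,g_{\lfloor d/2\rfloor+1})\in\mathbb Z^{\lfloor d/2\rfloor+2}$ with $g_0=C(r-1,d,-k)=\delta_{0,k}$ and $g_i=C(r-1,d,ir-k)-C(r-1,d,(i-1)r-k)$ for $1\le i\le\lfloor d/2\rfloor+1$; if $k\ge r$, $\hat g^{r,d}_k$ is the zero vector. The vector $g^{r,d}_k\in\mathbb Z^{\lfloor d/2\rfloor+1}$ is obtained from $\hat g^{r,d}_k$ by deleting its last entry. For a vector $v$, $\mathrm{last}(v)$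 denotes its rightmost entry. *)

theory Defs
  imports Main
begin

definition Ccount :: "nat \<Rightarrow> nat \<Rightarrow> int \<Rightarrow> int" where
  "Ccount r d i = int (card {u :: nat list. length u = d \<and> (\<forall>x\<in>set u. x \<le> r) \<and> int (sum_list u) = i})"

definition ghat :: "nat \<Rightarrow> nat \<Rightarrow> nat \<Rightarrow> int list" where
  "ghat r d k = (if k < r then
     map (\<lambda>i. if i = 0 then Ccount (r - 1) d (- int k)
               else Ccount (r - 1) d (int i * int r - int k) - Ccount (r - 1) d ((int i - 1) * int r - int k))
         [0..<d div 2 + 2]
   else replicate (d div 2 + 2) 0)"

definition gvec :: "nat \<Rightarrow> nat \<Rightarrow> nat \<Rightarrow> int list" where
  "gvec r d k = butlast (ghat r d k)"

end

theory Submission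
  imports Defs
begin

(*
  Write C_d(j) for Ccount (r - 1) d j and N = d (r - 1).  The entries of hat g^{r,d}_k are
  the consecutive differences  g_i = C_d(i r - k) - C_d((i - 1) r - k)  (i >= 1), whose
  arguments a = i r - k and b = a - r lie r apart.  The whole theorem follows from the
  classical fact that the coefficient sequence j |-> C_d(j) of (1 + x + ... + x^(r-1))^d is
  symmetric about N/2 and unimodal, strictly so on [0, N/2] once d >= 2.

  For such a sequence f and b < a, the sign of f a - f b is the sign of N - (a + b):
  a and b are compared by their distances to the centre N/2.  Hence every entry satisfies
  sgn g_i = sgn (N - (2i - 1) r + 2k), and parts (i)-(iii) are sign computations for the
  last entries i = floor(d/2) (of g) and i = floor(d/2) + 1 (of hat g).
*)

lemma Ccount_0: "Ccount m 0 j = (if j = 0 then 1 else 0)"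
proof -
  have "{u :: nat list. length u = 0 \<and> (\<forall>x\<in>set u. x \<le> m) \<and> int (sum_list u) = j}
        = (if j = 0 then {[]} else {})" by auto
  then show ?thesis by (simp add: Ccount_def)
qed

(* Splitting off the first coordinate u in {0..m}: C_{d+1}(j) = sum of C_d(j - u). *)
lemma Ccount_Suc: "Ccount m (Suc d) j = (\<Sum>u = 0..m. Ccount m d (j - int u))"
proof -
  define S where "S d j = {u :: nat list. length u = d \<and> (\<forall>x\<in>set u. x \<le> m) \<and> int (sum_list u) = j}"
    for d j
  have fin: "finite (S d j)" for d j
    by (rule finite_subset[OF _ finite_lists_length_eq[OF finite_atLeastAtMost[of 0 m], of d]])
      (auto simp: S_def)
  have split_head: "S (Suc d) j = (\<Union>x\<in>{0..m}. Cons x ` S d (j - int x))"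
  proof (intro set_eqI iffI)
    fix u assume "u \<in> S (Suc d) j"
    then obtain x xs where "u = x # xs" "x \<le> m" "xs \<in> S d (j - int x)"
      by (cases u) (auto simp: S_def)
    then show "u \<in> (\<Union>x\<in>{0..m}. Cons x ` S d (j - int x))" by auto
  qed (auto simp: S_def)
  have "card (S (Suc d) j) = (\<Sum>x = 0..m. card (Cons x ` S d (j - int x)))"
    unfolding split_head by (rule card_UN_disjoint) (auto intro: fin)
  also have "\<dots> = (\<Sum>x = 0..m. card (S d (j - int x)))"
    by (rule sum.cong) (auto intro: card_image)
  finally show ?thesis by (simp add: Ccount_def S_def[symmetric])
qed

lemma Ccount_one: "Ccount m 1 j = (if 0 \<le> j \<and> j \<le> int m then 1 else 0)"
proof -
  have "Ccount m 1 j = (\<Sum>u = 0..m. if j = int u then 1 else 0)"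
    by (simp add: Ccount_Suc Ccount_0)
  also have "\<dots> = (\<Sum>u = 0..m. if u = nat j \<and> 0 \<le> j then 1 else 0)"
    by (rule sum.cong) auto
  also have "\<dots> = (if 0 \<le> j \<and> j \<le> int m then 1 else 0)"
    by (cases "0 \<le> j") (auto simp: nat_le_iff)
  finally show ?thesis .
qed

(* Symmetry C_d(d m - j) = C_d(j) (reflection u_l -> m - u_l), by induction via the recursion,
   reversing the summation range. *)
lemma Ccount_sym: "Ccount m d (int d * int m - j) = Ccount m d j"
proof (induction d arbitrary: j)
  case 0
  then show ?case by (simp add: Ccount_0)
next
  case (Suc d)
  have "Ccount m (Suc d) (int (Suc d) * int m - j)
        = (\<Sum>u = 0..m. Ccount m d (int d * int m - (j + int u - int m)))"
    by (simp add: Ccount_Suc algebra_simps)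
  also have "\<dots> = (\<Sum>u = 0..m. Ccount m d (j + int u - int m))"
    using Suc.IH by simp
  also have "\<dots> = (\<Sum>u = 0..m. Ccount m d (j + int (m + 0 - u) - int m))"
    by (rule sum.atLeastAtMost_rev)
  also have "\<dots> = Ccount m (Suc d) j"
    by (auto simp: Ccount_Suc of_nat_diff intro: sum.cong)
  finally show ?case .
qed

(* Telescoping the convolution: the increments of C_{d+1} are differences of C_d at
   arguments m + 1 apart.  This drives the induction for unimodality. *)
lemma Ccount_Suc_diff:
  "Ccount m (Suc d) j - Ccount m (Suc d) (j - 1) = Ccount m d j - Ccount m d (j - int m - 1)"
proof -
  have "(\<Sum>u = 0..m. Ccount m d (j - 1 - int u)) = (\<Sum>u = Suc 0..Suc m. Ccount m d (j - int u))"
    by (subst sum.shift_bounds_cl_Suc_ivl) (simp add: algebra_simps)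
  also have "\<dots> = (\<Sum>u = Suc 0..m. Ccount m d (j - int u)) + Ccount m d (j - int m - 1)"
    by (simp add: algebra_simps)
  finally show ?thesis
    by (simp add: Ccount_Suc sum.atLeast_Suc_atMost[of 0 m])
qed

locale sym_unimodal =
  fixes N :: int and f :: "int \<Rightarrow> int"
  assumes sym: "f (N - j) = f j"
    and mono: "2 * j \<le> N \<Longrightarrow> f (j - 1) \<le> f j"
begin

lemma le_upto: "b \<le> t \<Longrightarrow> 2 * t \<le> N \<Longrightarrow> f b \<le> f t"
proof (induction t rule: int_ge_induct)
  case (step t)
  then have "f b \<le> f t" by simp
  also have "\<dots> \<le> f (t + 1)" using mono[of "t + 1"] step.prems by simp
  finally show ?case .
qed simp

(* Of two arguments, the one closer to the centre has the larger value. *)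
lemma le: "b \<le> a \<Longrightarrow> a + b \<le> N \<Longrightarrow> f b \<le> f a"
proof (cases "2 * a \<le> N")
  case False
  assume "a + b \<le> N"
  then have "f b \<le> f (N - a)" using False by (intro le_upto) auto
  then show ?thesis by (simp add: sym)
qed (simp add: le_upto)

end

locale strict_sym_unimodal = sym_unimodal +
  assumes strict: "0 \<le> j \<Longrightarrow> 2 * j \<le> N \<Longrightarrow> f (j - 1) < f j"
begin

lemma less_if_sum_less:
  assumes "b < a" "a + b < N" "0 \<le> a" "a \<le> N"
  shows "f b < f a"
proof -
  define t where "t = min a (N - a)"
  have "f b \<le> f (t - 1)" using assms by (intro le_upto) (auto simp: t_def min_def)
  also have "\<dots> < f t" using assms by (intro strict) (auto simp: t_def min_def)
  also have "f t = f a" by (simp add: t_def min_def sym)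
  finally show ?thesis .
qed

lemma sgn_diff:
  assumes "b < a" "a - b \<le> N" "0 \<le> a" "b \<le> N"
  shows "sgn (f a - f b) = sgn (N - (a + b))"
proof (cases "a + b" N rule: linorder_cases)
  case less
  have "f b < f a" using assms less by (intro less_if_sum_less) auto
  then show ?thesis using less by (simp add: sgn_if)
next
  case equal
  then have "b = N - a" by simp
  then have "f b = f a" by (simp add: sym)
  then show ?thesis using equal by simp
next
  case greater
  have "f (N - a) < f (N - b)" using assms greater by (intro less_if_sum_less) auto
  then show ?thesis using greater by (simp add: sgn_if sym)
qed

end

lemma Ccount_sym_unimodal: "sym_unimodal (int d * int m) (Ccount m d)"
proof (induction d)
  case 0
  show ?case by unfold_locales (auto simp: Ccount_0)
next
  case (Suc d)
  interpret IH: sym_unimodal "int d * int m" "Ccount m d" by (fact Suc.IH)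
  show ?case
  proof unfold_locales
    fix j :: int
    assume "2 * j \<le> int (Suc d) * int m"
    then have "Ccount m d (j - int m - 1) \<le> Ccount m d j"
      by (intro IH.le) (auto simp: algebra_simps)
    then show "Ccount m (Suc d) (j - 1) \<le> Ccount m (Suc d) j"
      using Ccount_Suc_diff[of m d j] by simp
  qed (rule Ccount_sym)
qed

(* For d >= 2 the increments are strictly positive up to the centre: for d = 2 they equal
   1, and the induction step uses the strict comparison for C_d. *)
lemma Ccount_strict_sym_unimodal:
  assumes "2 \<le> d"
  shows "strict_sym_unimodal (int d * int m) (Ccount m d)"
  using assms
proof (induction d rule: nat_induct_at_least)
  case base
  show ?case
  proof (intro_locales)
    show "strict_sym_unimodal_axioms (int 2 * int m) (Ccount m 2)"
    proof unfold_locales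
      fix j :: int
      assume "0 \<le> j" "2 * j \<le> int 2 * int m"
      then have "Ccount m 1 j - Ccount m 1 (j - int m - 1) = 1"
        by (simp add: Ccount_one[unfolded One_nat_def])
      then show "Ccount m 2 (j - 1) < Ccount m 2 j"
        using Ccount_Suc_diff[of m 1 j] by (simp add: numeral_2_eq_2)
    qed
  qed (rule Ccount_sym_unimodal)
next
  case (Suc d)
  interpret IH: strict_sym_unimodal "int d * int m" "Ccount m d" by (fact Suc.IH)
  show ?case
  proof (intro_locales)
    show "strict_sym_unimodal_axioms (int (Suc d) * int m) (Ccount m (Suc d))"
    proof unfold_locales
      fix j :: int
      assume "0 \<le> j" and "2 * j \<le> int (Suc d) * int m"
      then have "2 * j \<le> int m + int d * int m" by (simp add: distrib_right)
      moreover have "int m \<le> int d * int m"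
        using Suc.hyps by (simp add: mult_le_cancel_right1)
      ultimately have "Ccount m d (j - int m - 1) < Ccount m d j"
        using \<open>0 \<le> j\<close> by (intro IH.less_if_sum_less) linarith+
      then show "Ccount m (Suc d) (j - 1) < Ccount m (Suc d) j"
        using Ccount_Suc_diff[of m d j] by simp
    qed
  qed (rule Ccount_sym_unimodal)
qed

definition g_entry :: "nat \<Rightarrow> nat \<Rightarrow> nat \<Rightarrow> nat \<Rightarrow> int" where
  "g_entry r d k i = (if i = 0 then Ccount (r - 1) d (- int k)
     else Ccount (r - 1) d (int i * int r - int k) - Ccount (r - 1) d ((int i - 1) * int r - int k))"

lemma ghat_entries: "k < r \<Longrightarrow> ghat r d k = map (g_entry r d k) [0..<d div 2 + 2]"
  by (simp add: ghat_def g_entry_def)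

lemma last_ghat: "k < r \<Longrightarrow> last (ghat r d k) = g_entry r d k (d div 2 + 1)"
  by (simp add: ghat_entries)

lemma last_ghat_vanishing: "r \<le> k \<Longrightarrow> last (ghat r d k) = 0"
  by (simp add: ghat_def)

lemma gvec_entries: "k < r \<Longrightarrow> gvec r d k = map (g_entry r d k) [0..<d div 2 + 1]"
  by (simp add: gvec_def ghat_entries butlast_append)

lemma g_entry_sgn:
  assumes "1 \<le> d" "d \<le> r" "k < r" "1 \<le> i" "i \<le> d div 2 + 1"
  shows "sgn (g_entry r d k i) = sgn (int d * (int r - 1) - (2 * int i - 1) * int r + 2 * int k)"
proof (cases "d = 1")
  case True
  then have "i = 1" using assms(4,5) by simp
  then show ?thesis using True assms(3)
    by (cases "k = 0") (auto simp: g_entry_def Ccount_one[unfolded One_nat_def])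
next
  case False
  then have d2: "2 \<le> d" using assms(1) by simp
  interpret strict_sym_unimodal "int d * int (r - 1)" "Ccount (r - 1) d"
    using d2 by (rule Ccount_strict_sym_unimodal)
  have N_eq: "int d * int (r - 1) = int d * (int r - 1)" using assms(3) by simp
  have "(int i - 1) * int r \<le> int (d div 2) * int r" using assms(5) by (simp add: mult_right_mono)
  also have "\<dots> \<le> int (d div 2) * (2 * int r - 2)"
    using d2 assms(2) by (intro mult_left_mono) auto
  also have "\<dots> = int (2 * (d div 2)) * (int r - 1)" by (simp add: algebra_simps)
  also have "\<dots> \<le> int d * (int r - 1)"
    using assms(2,3) by (intro mult_right_mono) auto
  finally have below_N: "(int i - 1) * int r \<le> int d * (int r - 1)" .
  have "int r \<le> 2 * (int r - 1)" using d2 assms(2) by simp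
  also have "\<dots> \<le> int d * (int r - 1)" using d2 assms(3) by (intro mult_right_mono) auto
  finally have r_below_N: "int r \<le> int d * (int r - 1)" .
  define a where "a = int i * int r - int k"
  define b where "b = (int i - 1) * int r - int k"
  have a_b: "a = b + int r" by (simp add: a_def b_def algebra_simps)
  have "int r \<le> int i * int r" using assms(4) by (simp add: mult_le_cancel_right1)
  then have "0 \<le> a" using assms(3) unfolding a_def by linarith
  then have "sgn (Ccount (r - 1) d a - Ccount (r - 1) d b) = sgn (int d * int (r - 1) - (a + b))"
    using a_b below_N r_below_N N_eq assms(3) by (intro sgn_diff) (auto simp: b_def)
  moreover have "int d * int (r - 1) - (a + b)
      = int d * (int r - 1) - (2 * int i - 1) * int r + 2 * int k"
    using N_eq by (simp add: a_def b_def algebra_simps)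
  moreover have "g_entry r d k i = Ccount (r - 1) d a - Ccount (r - 1) d b"
    using assms(4) by (simp add: g_entry_def a_def b_def)
  ultimately show ?thesis by (simp only:)
qed

lemma last_ghat_sgn:
  assumes "1 \<le> d" "d \<le> r" "k < r"
  shows "sgn (last (ghat r d k)) = sgn (2 * int k - int d - (if even d then int r else 0))"
proof -
  define h where "h = d div 2"
  have "sgn (last (ghat r d k))
      = sgn (int d * (int r - 1) - (2 * int (h + 1) - 1) * int r + 2 * int k)"
    using assms by (simp add: last_ghat g_entry_sgn h_def)
  also have "int d * (int r - 1) - (2 * int (h + 1) - 1) * int r + 2 * int k
      = 2 * int k - int d - (if even d then int r else 0)"
  proof (cases "even d")
    case True
    then have "int d = 2 * int h" unfolding h_def by presburger
    then show ?thesis using True by (simp add: algebra_simps)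
  next
    case False
    then have "int d = 2 * int h + 1" unfolding h_def by presburger
    then show ?thesis using False by (simp add: algebra_simps)
  qed
  finally show ?thesis .
qed

lemma last_gvec_sgn:
  assumes "2 \<le> d" "d \<le> r" "k < r"
  shows "sgn (last (gvec r d k)) = sgn (2 * int k + int r - int d + (if even d then 0 else int r))"
proof -
  define h where "h = d div 2"
  have "sgn (last (gvec r d k))
      = sgn (int d * (int r - 1) - (2 * int h - 1) * int r + 2 * int k)"
    using assms by (simp add: gvec_entries g_entry_sgn h_def)
  also have "int d * (int r - 1) - (2 * int h - 1) * int r + 2 * int k
      = 2 * int k + int r - int d + (if even d then 0 else int r)"
  proof (cases "even d")
    case True
    then have "int d = 2 * int h" unfolding h_def by presburger
    then show ?thesis using True by (simp add: algebra_simps)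
  next
    case False
    then have "int d = 2 * int h + 1" unfolding h_def by presburger
    then show ?thesis using False by (simp add: algebra_simps)
  qed
  finally show ?thesis .
qed

lemma last_gvec_one: "k < r \<Longrightarrow> last (gvec r 1 k) = (if k = 0 then 1 else 0)"
  by (simp add: gvec_entries g_entry_def Ccount_one[unfolded One_nat_def])

(* Part (i), first half: entry 0 is a count, and entries 1 .. floor(d/2) have
   N - (2i - 1) r + 2k >= r - d >= 0. *)
lemma gvec_nonneg:
  assumes "1 \<le> d" "d \<le> r" "k < r" "x \<in> set (gvec r d k)"
  shows "0 \<le> x"
proof -
  obtain i where i: "i < d div 2 + 1" "x = g_entry r d k i"
    using assms(4) unfolding gvec_entries[OF assms(3)] set_map set_upt by auto
  show ?thesis
  proof (cases "i = 0")
    case True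
    then show ?thesis using i by (simp add: g_entry_def Ccount_def)
  next
    case False
    have "int (2 * i) * int r \<le> int d * int r"
      using i(1) by (intro mult_right_mono) auto
    then have "0 \<le> int d * (int r - 1) - (2 * int i - 1) * int r + 2 * int k"
      using assms(2) by (simp add: algebra_simps)
    moreover have "sgn x = sgn (int d * (int r - 1) - (2 * int i - 1) * int r + 2 * int k)"
      using i False assms(1-3) by (simp add: g_entry_sgn)
    ultimately show ?thesis by (metis sgn_less not_less)
  qed
qed

lemma last_gvec_zero_iff:
  assumes "1 \<le> d" "d \<le> r" "k < r"
  shows "last (gvec r d k) = 0 \<longleftrightarrow> (even d \<and> d = r \<and> k = 0) \<or> (d = 1 \<and> 0 < k)"
proof (cases "d = 1")
  case True
  then show ?thesis using last_gvec_one[OF assms(3)] by simp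
next
  case False
  then have "sgn (last (gvec r d k)) = sgn (2 * int k + int r - int d + (if even d then 0 else int r))"
    using assms by (intro last_gvec_sgn) auto
  then have "last (gvec r d k) = 0 \<longleftrightarrow> 2 * int k + int r - int d + (if even d then 0 else int r) = 0"
    by (metis sgn_0_0)
  moreover have "2 * int k + int r - int d + (if even d then 0 else int r) = 0
      \<longleftrightarrow> even d \<and> d = r \<and> k = 0"
    using assms(1,2) by (cases "even d") auto
  ultimately show ?thesis using False by simp
qed

(* Part (iii), balanced case: for k = (d + r)/2 the two compared arguments are symmetric
   about the centre, or k = r and the vector vanishes. *)
lemma last_ghat_balanced:
  assumes "1 \<le> d" "d \<le> r" "even d" "even r"
  shows "last (ghat r d ((d + r) div 2)) = 0"
proof (cases "(d + r) div 2 < r")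
  case True
  have "2 * ((d + r) div 2) = d + r" using assms(3,4) by presburger
  then have "2 * int ((d + r) div 2) = int d + int r" by linarith
  then have "sgn (last (ghat r d ((d + r) div 2))) = 0"
    using last_ghat_sgn[OF assms(1,2) True] assms(3) by simp
  then show ?thesis by (simp add: sgn_0_0)
qed (simp add: last_ghat_vanishing)

theorem mainTheorem7:
  fixes r d k :: nat
  assumes "1 \<le> d" and "d \<le> r" and "k \<le> r - 1"
  shows "((\<forall>x\<in>set (gvec r d k). x \<ge> 0) \<and>
          (last (gvec r d k) = 0 \<longleftrightarrow> (even d \<and> d = r \<and> k = 0) \<or> (d = 1 \<and> k > 0)))
       \<and> (odd d \<longrightarrow> ((2 * k \<ge> d \<longrightarrow> last (ghat r d k) > 0) \<and> (2 * k < d \<longrightarrow> last (ghat r d k) < 0)))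
       \<and> (even d \<longrightarrow> ((2 * k > d + r \<longrightarrow> last (ghat r d k) > 0) \<and> (2 * k < d + r \<longrightarrow> last (ghat r d k) < 0)
                       \<and> (even r \<longrightarrow> last (ghat r d ((d + r) div 2)) = 0)))"
proof -
  have k: "k < r" using assms by auto
  have "sgn (last (ghat r d k)) = sgn (2 * int k - int d - (if even d then int r else 0))"
    using assms(1,2) k by (rule last_ghat_sgn)
  then have pos: "0 < last (ghat r d k) \<longleftrightarrow> 0 < 2 * int k - int d - (if even d then int r else 0)"
    and neg: "last (ghat r d k) < 0 \<longleftrightarrow> 2 * int k - int d - (if even d then int r else 0) < 0"
    by (metis sgn_greater, metis sgn_less)
  show ?thesis
  proof (intro conjI impI)
    show "\<forall>x\<in>set (gvec r d k). 0 \<le> x" using gvec_nonneg[OF assms(1,2) k] by blast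
    show "last (gvec r d k) = 0 \<longleftrightarrow> (even d \<and> d = r \<and> k = 0) \<or> (d = 1 \<and> 0 < k)"
      using assms(1,2) k by (rule last_gvec_zero_iff)
    show "even r \<Longrightarrow> last (ghat r d ((d + r) div 2)) = 0" if "even d"
      using assms(1,2) that by (rule last_ghat_balanced)
  next
    assume "odd d" "d \<le> 2 * k"
    then show "0 < last (ghat r d k)" unfolding pos by presburger
  next
    assume "odd d" "2 * k < d"
    then show "last (ghat r d k) < 0" unfolding neg by simp
  next
    assume "even d" "d + r < 2 * k"
    then show "0 < last (ghat r d k)" unfolding pos by simp
  next
    assume "even d" "2 * k < d + r"
    then show "last (ghat r d k) < 0" unfolding neg by simp
  qed
qed

end
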